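(* Let $r\ge 2$, $\alpha=2^r-1$, $\beta=2^{r-1}(2^r-1)$, let $\mathcal{C}\subseteq\mathbb{Z}_2^\alpha\times\mathbb{Z}_4^\beta$ be a $\mathbb{Z}_2\mathbb{Z}_4$-additive 1-perfect code and $D=\mathcal{C}^\perp$. Then every nonzero codeword of $D$ has weight $2^{2r-1}$.
   Context: A $\mathbb{Z}_2\mathbb{Z}_4$-additive code is an additive subgroup of $\mathbb{Z}_2^\alpha\times\mathbb{Z}_4^\beta$; vectors are $\mathbf{u}=(u\mid u')$ with $u\in\mathbb{Z}_2^\alpha$, $u'\in\mathbb{Z}_4^\beta$. The weight is $w(\mathbf{u})=w_H(u)+w_L(u')$ (Hamming weight plus Lee weight, Lee weights of $0,1,2,3$ being $0,1,2,1$). The Gray map $\phi:\mathbb{Z}_4\to\mathbb{Z}_2^2$ is $0\mapsto(0,0),1\mapsto(0,1),2\mapsto(1,1),3\mapsto(1,0)$, $\Phi(u\mid u')=(u\mid\phi(u'_1),\dots,\phi(u'_\beta))$. A binary code $C\subseteq\mathbb{Z}_2^n$ is 1-perfect if the Hamming balls of radius 1 around its codewords partition $\mathbb{Z}_2^n$; a $\mathbb{Z}_2\mathbb{Z}_4$-additive code is 1-perfect if its Gray image is. The dual is $\mathcal{C}^\perp=\{\mathbf{v}:\mathbf{u}\cdot\mathbf{v}=0\ \forall\mathbf{u}\in\mathcal{C}\}$ with $\mathbf{u}\cdot\mathbf{v}=2\sum_{i=1}^\alpha u_iv_i+\sum_{j=1}^\beta u'_jv'_j\in\mathbb{Z}_4$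 (binary entries read as $0,1\in\mathbb{Z}_4$). *)

theory Defs
  imports Main
begin

text \<open>Vectors of Z2^alpha x Z4^beta are pairs of lists of naturals: the binary part
  has entries in {0,1}, the quaternary part entries in {0,1,2,3}.\<close>

type_synonym z2z4vec = "nat list \<times> nat list"

definition z2z4_space :: "nat \<Rightarrow> nat \<Rightarrow> z2z4vec set" where
  "z2z4_space a b = {(u, u'). length u = a \<and> set u \<subseteq> {0,1} \<and>
                              length u' = b \<and> set u' \<subseteq> {0,1,2,3}}"

definition z2z4_zero :: "nat \<Rightarrow> nat \<Rightarrow> z2z4vec" where
  "z2z4_zero a b = (replicate a 0, replicate b 0)"

definition z2z4_add :: "z2z4vec \<Rightarrow> z2z4vec \<Rightarrow> z2z4vec" where
  "z2z4_add x y = (map2 (\<lambda>p q. (p + q) mod 2) (fst x) (fst y),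
                   map2 (\<lambda>p q. (p + q) mod 4) (snd x) (snd y))"

definition z2z4_neg :: "z2z4vec \<Rightarrow> z2z4vec" where
  "z2z4_neg x = (map (\<lambda>p. (2 - p) mod 2) (fst x), map (\<lambda>p. (4 - p) mod 4) (snd x))"

definition z2z4_additive :: "nat \<Rightarrow> nat \<Rightarrow> z2z4vec set \<Rightarrow> bool" where
  "z2z4_additive a b C \<longleftrightarrow> C \<subseteq> z2z4_space a b \<and> z2z4_zero a b \<in> C \<and>
     (\<forall>x\<in>C. \<forall>y\<in>C. z2z4_add x y \<in> C) \<and> (\<forall>x\<in>C. z2z4_neg x \<in> C)"

definition lee_weight :: "nat \<Rightarrow> nat" where
  "lee_weight x = (if x = 0 then 0 else if x = 2 then 2 else 1)"

definition z2z4_weight :: "z2z4vec \<Rightarrow> nat" where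
  "z2z4_weight x = length (filter (\<lambda>p. p \<noteq> 0) (fst x)) + sum_list (map lee_weight (snd x))"

definition gray :: "nat \<Rightarrow> nat list" where
  "gray x = (if x = 0 then [0,0] else if x = 1 then [0,1] else if x = 2 then [1,1] else [1,0])"

definition Gray :: "z2z4vec \<Rightarrow> nat list" where
  "Gray x = fst x @ concat (map gray (snd x))"

definition bin_space :: "nat \<Rightarrow> nat list set" where
  "bin_space n = {v. length v = n \<and> set v \<subseteq> {0,1}}"

definition hamming_dist :: "nat list \<Rightarrow> nat list \<Rightarrow> nat" where
  "hamming_dist x y = length (filter (\<lambda>(p,q). p \<noteq> q) (zip x y))"

definition one_perfect :: "nat \<Rightarrow> nat list set \<Rightarrow> bool" where
  "one_perfect n C \<longleftrightarrow> C \<subseteq> bin_space n \<and>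
     (\<forall>x\<in>bin_space n. \<exists>!c. c \<in> C \<and> hamming_dist x c \<le> 1)"

definition z2z4_one_perfect :: "nat \<Rightarrow> nat \<Rightarrow> z2z4vec set \<Rightarrow> bool" where
  "z2z4_one_perfect a b C \<longleftrightarrow> one_perfect (a + 2 * b) (Gray ` C)"

definition z2z4_inner :: "z2z4vec \<Rightarrow> z2z4vec \<Rightarrow> nat" where
  "z2z4_inner x y = (2 * sum_list (map2 (*) (fst x) (fst y))
                     + sum_list (map2 (*) (snd x) (snd y))) mod 4"

definition z2z4_dual :: "nat \<Rightarrow> nat \<Rightarrow> z2z4vec set \<Rightarrow> z2z4vec set" where
  "z2z4_dual a b C = {v \<in> z2z4_space a b. \<forall>u\<in>C. z2z4_inner u v = 0}"

end

theory Submission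
  imports Defs "HOL-Number_Theory.Cong"
begin

text \<open>For a nonzero dual vector \<open>v\<close>, sum the real parts of the character
  \<open>x \<mapsto> i^(x\<cdot>v)\<close> over the whole space. Orthogonality of characters makes the sum
  vanish. On the other hand the space is the direct sum of \<open>C\<close> and the ball \<open>B\<close> of
  vectors of weight at most 1 (the Gray map turns weight into Hamming distance), and the
  character is trivial on \<open>C\<close>; so the sum is \<open>|C|\<close> times the sum over \<open>B\<close>, which
  equals \<open>1 + \<alpha> + 2\<beta> - 2 w(v)\<close>. Hence \<open>w(v) = (1 + \<alpha> + 2\<beta>)/2 = 2^(2r-1)\<close>.\<close>

lemma z2z4_space_iff:
  "x \<in> z2z4_space a b \<longleftrightarrow> length (fst x) = a \<and> set (fst x) \<subseteq> {0,1} \<and>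
                            length (snd x) = b \<and> set (snd x) \<subseteq> {0,1,2,3}"
  by (cases x) (auto simp: z2z4_space_def)

lemma z2z4_space_0_0: "z2z4_space 0 0 = {([],[])}"
  by (auto simp: z2z4_space_def)

lemma z2z4_space_Suc_bin:
  "z2z4_space (Suc a) b = (\<lambda>(p,(u,u')). (p#u,u')) ` ({0,1} \<times> z2z4_space a b)"
  by (auto simp: z2z4_space_def length_Suc_conv image_iff)

lemma z2z4_space_Suc_quat:
  "z2z4_space a (Suc b) = (\<lambda>(p,(u,u')). (u,p#u')) ` ({0,1,2,3} \<times> z2z4_space a b)"
  by (auto simp: z2z4_space_def length_Suc_conv image_iff)

lemma finite_z2z4_space: "finite (z2z4_space a b)"
proof (rule finite_subset)
  show "z2z4_space a b \<subseteq> {xs. set xs \<subseteq> {0,1} \<and> length xs = a} \<times>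
                         {xs. set xs \<subseteq> {0,1,2,3} \<and> length xs = b}"
    by (auto simp: z2z4_space_def)
  show "finite ({xs. set xs \<subseteq> {0,1::nat} \<and> length xs = a} \<times>
                {xs. set xs \<subseteq> {0,1,2,3::nat} \<and> length xs = b})"
    by (intro finite_cartesian_product finite_lists_length_eq) auto
qed

lemma z2z4_zero_in_space: "z2z4_zero a b \<in> z2z4_space a b"
  by (auto simp: z2z4_zero_def z2z4_space_def)

lemma z2z4_add_in_space:
  "c \<in> z2z4_space a b \<Longrightarrow> e \<in> z2z4_space a b \<Longrightarrow> z2z4_add c e \<in> z2z4_space a b"
  by (auto simp: z2z4_space_iff z2z4_add_def set_zip)

lemma z2z4_dims_induct [case_names 0 Suc_bin Suc_quat]:
  assumes "P 0 0" "\<And>a b. P a b \<Longrightarrow> P (Suc a) b" "\<And>a b. P a b \<Longrightarrow> P a (Suc b)"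
  shows "P a b"
proof (induction a)
  case 0 show ?case by (induction b) (use assms in auto)
qed (use assms in auto)

lemma sum_z2z4_space_Suc_bin:
  "(\<Sum>x\<in>z2z4_space (Suc a) b. h x) = (\<Sum>p\<in>{0,1}. \<Sum>u\<in>z2z4_space a b. h (p#fst u, snd u))"
proof -
  have "inj_on (\<lambda>(p,(u,u')). (p#u,u')) ({0,1} \<times> z2z4_space a b)"
    by (auto simp: inj_on_def)
  then have "(\<Sum>x\<in>z2z4_space (Suc a) b. h x)
      = (\<Sum>y\<in>{0,1} \<times> z2z4_space a b. h ((\<lambda>(p,(u,u')). (p#u,u')) y))"
    unfolding z2z4_space_Suc_bin by (rule sum.reindex[unfolded comp_def])
  also have "\<dots> = (\<Sum>p\<in>{0,1}. \<Sum>u\<in>z2z4_space a b. h (p#fst u, snd u))"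
    unfolding sum.cartesian_product by (rule sum.cong) (auto split: prod.splits)
  finally show ?thesis .
qed

lemma sum_z2z4_space_Suc_quat:
  "(\<Sum>x\<in>z2z4_space a (Suc b). h x) = (\<Sum>p\<in>{0,1,2,3}. \<Sum>u\<in>z2z4_space a b. h (fst u, p#snd u))"
proof -
  have "inj_on (\<lambda>(p,(u,u')). (u,p#u')) ({0,1,2,3} \<times> z2z4_space a b)"
    by (auto simp: inj_on_def)
  then have "(\<Sum>x\<in>z2z4_space a (Suc b). h x)
      = (\<Sum>y\<in>{0,1,2,3} \<times> z2z4_space a b. h ((\<lambda>(p,(u,u')). (u,p#u')) y))"
    unfolding z2z4_space_Suc_quat by (rule sum.reindex[unfolded comp_def])
  also have "\<dots> = (\<Sum>p\<in>{0,1,2,3}. \<Sum>u\<in>z2z4_space a b. h (fst u, p#snd u))"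
    unfolding sum.cartesian_product by (rule sum.cong) (auto split: prod.splits)
  finally show ?thesis .
qed

lemma z2z4_weight_Cons_bin [simp]:
  "z2z4_weight (p#u, u') = (if p = 0 then 0 else 1) + z2z4_weight (u, u')"
  by (simp add: z2z4_weight_def)

lemma z2z4_weight_Cons_quat [simp]:
  "z2z4_weight (u, p#u') = lee_weight p + z2z4_weight (u, u')"
  by (simp add: z2z4_weight_def)

lemma z2z4_weight_eq_0_iff:
  assumes "u \<in> z2z4_space a b"
  shows "z2z4_weight u = 0 \<longleftrightarrow> u = z2z4_zero a b"
proof
  assume w: "z2z4_weight u = 0"
  have "\<forall>x\<in>set (fst u). x = 0" using w by (auto simp: z2z4_weight_def filter_empty_conv)
  then have "fst u = replicate a 0"
    using assms replicate_length_same[of "fst u" 0] by (auto simp: z2z4_space_def)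
  moreover have "snd u = replicate b 0"
  proof -
    have "\<forall>x\<in>set (snd u). lee_weight x = 0"
      using w by (auto simp: z2z4_weight_def sum_list_eq_0_iff)
    then have "\<forall>x\<in>set (snd u). x = 0" by (auto simp: lee_weight_def split: if_splits)
    then show ?thesis
      using assms replicate_length_same[of "snd u" 0] by (auto simp: z2z4_space_def)
  qed
  ultimately show "u = z2z4_zero a b" by (simp add: z2z4_zero_def prod_eq_iff)
qed (simp add: z2z4_zero_def z2z4_weight_def lee_weight_def)

lemma sum_z2z4_space_if_weight_eq_0:
  "(\<Sum>u\<in>z2z4_space a b. if z2z4_weight u = 0 then f u else 0) = f (z2z4_zero a b)"
proof -
  have "(\<Sum>u\<in>z2z4_space a b. if z2z4_weight u = 0 then f u else 0)
      = (\<Sum>u\<in>z2z4_space a b. if u = z2z4_zero a b then f u else 0)"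
    by (rule sum.cong) (auto simp: z2z4_weight_eq_0_iff)
  also have "\<dots> = f (z2z4_zero a b)"
    using finite_z2z4_space z2z4_zero_in_space by (simp add: sum.delta')
  finally show ?thesis .
qed

lemma map2_add_mod_cancel_left:
  assumes "length c = length e1" "length e1 = length e2"
    and "set c \<subseteq> {0..<k}" "set e1 \<subseteq> {0..<k}" "set e2 \<subseteq> {0..<k}"
    and "map2 (\<lambda>p q. (p + q) mod k) c e1 = map2 (\<lambda>p q. (p + q) mod (k::nat)) c e2"
  shows "e1 = e2"
  using assms
proof (induction c e1 e2 rule: list_induct3)
  case (Cons x xs y ys z zs)
  have "(x + y) mod k = (x + z) mod k" "y < k" "z < k" using Cons.prems by auto
  then have "y = z" using cong_add_lcancel_nat[of x y z k] by (simp add: cong_def)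
  then show ?case using Cons by auto
qed simp

lemma map2_add_mod_diff:
  assumes "length c = length x" "set c \<subseteq> {0..<k}" "set x \<subseteq> {0..<k}"
  shows "map2 (\<lambda>p q. (p + q) mod k) c (map2 (\<lambda>c x. (x + k - c) mod (k::nat)) c x) = x"
  using assms
proof (induction c x rule: list_induct2)
  case (Cons p ps q qs)
  have "p < k" "q < k" using Cons.prems by auto
  then have "(p + (q + k - p) mod k) mod k = q" by (simp add: mod_add_right_eq)
  then show ?case using Cons by auto
qed simp

lemma z2z4_add_cancel_left:
  assumes "c \<in> z2z4_space a b" "e1 \<in> z2z4_space a b" "e2 \<in> z2z4_space a b"
    and "z2z4_add c e1 = z2z4_add c e2"
  shows "e1 = e2"
proof -
  have "fst e1 = fst e2"
    by (rule map2_add_mod_cancel_left[where k=2 and c="fst c"])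
      (use assms in \<open>auto simp: z2z4_space_iff z2z4_add_def prod_eq_iff\<close>)
  moreover have "snd e1 = snd e2"
    by (rule map2_add_mod_cancel_left[where k=4 and c="snd c"])
      (use assms in \<open>auto simp: z2z4_space_iff z2z4_add_def prod_eq_iff\<close>)
  ultimately show ?thesis by (simp add: prod_eq_iff)
qed

lemma z2z4_add_surj:
  assumes "c \<in> z2z4_space a b" "x \<in> z2z4_space a b"
  obtains e where "e \<in> z2z4_space a b" "z2z4_add c e = x"
proof
  define e where "e = (map2 (\<lambda>c x. (x + 2 - c) mod 2) (fst c) (fst x),
                       map2 (\<lambda>c x. (x + 4 - c) mod 4) (snd c) (snd x))"
  show "e \<in> z2z4_space a b" using assms by (auto simp: e_def z2z4_space_iff set_zip)
  have "fst (z2z4_add c e) = fst x"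
    unfolding z2z4_add_def e_def fst_conv
    by (rule map2_add_mod_diff) (use assms in \<open>auto simp: z2z4_space_iff\<close>)
  moreover have "snd (z2z4_add c e) = snd x"
    unfolding z2z4_add_def e_def snd_conv
    by (rule map2_add_mod_diff) (use assms in \<open>auto simp: z2z4_space_iff\<close>)
  ultimately show "z2z4_add c e = x" by (simp add: prod_eq_iff)
qed

subsection \<open>The Gray map\<close>

lemma length_gray [simp]: "length (gray x) = 2"
  by (simp add: gray_def)

lemma length_concat_map_gray: "length (concat (map gray xs)) = 2 * length xs"
  by (induction xs) auto

lemma Gray_in_bin_space: "x \<in> z2z4_space a b \<Longrightarrow> Gray x \<in> bin_space (a + 2*b)"
  by (auto simp: Gray_def bin_space_def z2z4_space_iff length_concat_map_gray gray_def)

lemma hamming_dist_append: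
  "length xs = length xs' \<Longrightarrow>
    hamming_dist (xs @ ys) (xs' @ ys') = hamming_dist xs xs' + hamming_dist ys ys'"
  by (simp add: hamming_dist_def zip_append)

lemma hamming_dist_map2_add_mod_2:
  assumes "length c = length e" "set c \<subseteq> {0,1}" "set e \<subseteq> {0,1}"
  shows "hamming_dist (map2 (\<lambda>p q. (p + q) mod 2) c e) c = length (filter (\<lambda>p. p \<noteq> 0) e)"
  using assms
proof (induction c e rule: list_induct2)
  case (Cons x xs y ys)
  have "x \<in> {0,1}" "y \<in> {0,1}" using Cons.prems by auto
  then show ?case using Cons by (auto simp: hamming_dist_def)
qed (simp add: hamming_dist_def)

lemma hamming_dist_gray_add:
  "x \<in> {0,1,2,3} \<Longrightarrow> y \<in> {0,1,2,3} \<Longrightarrow>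
    hamming_dist (gray ((x + y) mod 4)) (gray x) = lee_weight y"
  by (elim insertE emptyE; simp add: hamming_dist_def gray_def lee_weight_def)

lemma hamming_dist_concat_map_gray_add:
  assumes "length c = length e" "set c \<subseteq> {0,1,2,3}" "set e \<subseteq> {0,1,2,3}"
  shows "hamming_dist (concat (map gray (map2 (\<lambda>p q. (p + q) mod 4) c e))) (concat (map gray c))
       = sum_list (map lee_weight e)"
  using assms
proof (induction c e rule: list_induct2)
  case (Cons x xs y ys)
  have "x \<in> {0,1,2,3}" "y \<in> {0,1,2,3}" using Cons.prems by auto
  then show ?case using Cons by (simp add: hamming_dist_append hamming_dist_gray_add)
qed (simp add: hamming_dist_def)

lemma hamming_dist_Gray_add:
  assumes "c \<in> z2z4_space a b" "e \<in> z2z4_space a b"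
  shows "hamming_dist (Gray (z2z4_add c e)) (Gray c) = z2z4_weight e"
proof -
  have "length (map2 (\<lambda>p q. (p + q) mod 2) (fst c) (fst e)) = length (fst c)"
    using assms by (simp add: z2z4_space_iff)
  moreover have "hamming_dist (map2 (\<lambda>p q. (p + q) mod 2) (fst c) (fst e)) (fst c)
      = length (filter (\<lambda>p. p \<noteq> 0) (fst e))"
    using assms by (intro hamming_dist_map2_add_mod_2) (auto simp: z2z4_space_iff)
  moreover have "hamming_dist (concat (map gray (map2 (\<lambda>p q. (p + q) mod 4) (snd c) (snd e))))
      (concat (map gray (snd c))) = sum_list (map lee_weight (snd e))"
    using assms by (intro hamming_dist_concat_map_gray_add) (auto simp: z2z4_space_iff)
  ultimately show ?thesis
    by (simp add: Gray_def z2z4_add_def hamming_dist_append z2z4_weight_def)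
qed

lemma concat_map_gray_inj:
  assumes "length xs = length ys" "set xs \<subseteq> {0,1,2,3}" "set ys \<subseteq> {0,1,2,3}"
    and "concat (map gray xs) = concat (map gray ys)"
  shows "xs = ys"
  using assms
proof (induction xs ys rule: list_induct2)
  case (Cons x xs y ys)
  have "gray x = gray y" and "concat (map gray xs) = concat (map gray ys)"
    using Cons.prems(3) append_eq_append_conv[of "gray x" "gray y"] by auto
  moreover have "x \<in> {0,1,2,3}" "y \<in> {0,1,2,3}" using Cons.prems by auto
  ultimately show ?case using Cons by (auto simp: gray_def split: if_splits)
qed simp

lemma inj_on_Gray: "inj_on Gray (z2z4_space a b)"
proof (rule inj_onI)
  fix x y assume x: "x \<in> z2z4_space a b" and y: "y \<in> z2z4_space a b" and "Gray x = Gray y"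
  then have "fst x = fst y" and "concat (map gray (snd x)) = concat (map gray (snd y))"
    using append_eq_append_conv[of "fst x" "fst y"] by (auto simp: Gray_def z2z4_space_iff)
  moreover have "snd x = snd y"
    by (rule concat_map_gray_inj) (use x y calculation in \<open>auto simp: z2z4_space_iff\<close>)
  ultimately show "x = y" by (simp add: prod_eq_iff)
qed

lemma one_perfect_unique_center:
  assumes "z2z4_one_perfect a b C" "x \<in> z2z4_space a b"
  shows "\<exists>!g. g \<in> Gray ` C \<and> hamming_dist (Gray x) g \<le> 1"
  using assms Gray_in_bin_space[OF assms(2)] by (simp add: z2z4_one_perfect_def one_perfect_def)

lemma one_perfect_add_inj_on:
  assumes CS: "C \<subseteq> z2z4_space a b" and perf: "z2z4_one_perfect a b C"
  shows "inj_on (\<lambda>(c,e). z2z4_add c e) (C \<times> {e \<in> z2z4_space a b. z2z4_weight e \<le> 1})"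
proof (rule inj_onI)
  fix ce1 ce2 assume "ce1 \<in> C \<times> {e \<in> z2z4_space a b. z2z4_weight e \<le> 1}"
    "ce2 \<in> C \<times> {e \<in> z2z4_space a b. z2z4_weight e \<le> 1}"
    and "(\<lambda>(c,e). z2z4_add c e) ce1 = (\<lambda>(c,e). z2z4_add c e) ce2"
  then obtain c1 e1 c2 e2 where ce: "ce1 = (c1,e1)" "ce2 = (c2,e2)" and c: "c1 \<in> C" "c2 \<in> C"
    and e: "e1 \<in> z2z4_space a b" "e2 \<in> z2z4_space a b" "z2z4_weight e1 \<le> 1" "z2z4_weight e2 \<le> 1"
    and eq: "z2z4_add c1 e1 = z2z4_add c2 e2"
    by (cases ce1, cases ce2) auto
  have cS: "c1 \<in> z2z4_space a b" "c2 \<in> z2z4_space a b" using c CS by auto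
  have "hamming_dist (Gray (z2z4_add c1 e1)) (Gray c1) \<le> 1"
    using e hamming_dist_Gray_add[OF cS(1), of e1] by simp
  moreover have "hamming_dist (Gray (z2z4_add c1 e1)) (Gray c2) \<le> 1"
    using e hamming_dist_Gray_add[OF cS(2), of e2] by (simp add: eq)
  ultimately have "Gray c1 = Gray c2"
    using one_perfect_unique_center[OF perf z2z4_add_in_space[OF cS(1) e(1)]] c by blast
  then have "c1 = c2" using inj_on_Gray cS by (auto dest: inj_onD)
  then show "ce1 = ce2" using z2z4_add_cancel_left[OF cS(1) e(1,2)] eq ce by simp
qed

lemma one_perfect_add_image:
  assumes CS: "C \<subseteq> z2z4_space a b" and perf: "z2z4_one_perfect a b C"
  shows "(\<lambda>(c,e). z2z4_add c e) ` (C \<times> {e \<in> z2z4_space a b. z2z4_weight e \<le> 1}) = z2z4_space a b"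
proof
  show "(\<lambda>(c,e). z2z4_add c e) ` (C \<times> {e \<in> z2z4_space a b. z2z4_weight e \<le> 1}) \<subseteq> z2z4_space a b"
    using CS z2z4_add_in_space by auto
  show "z2z4_space a b \<subseteq> (\<lambda>(c,e). z2z4_add c e) ` (C \<times> {e \<in> z2z4_space a b. z2z4_weight e \<le> 1})"
  proof
    fix x assume x: "x \<in> z2z4_space a b"
    then obtain c where c: "c \<in> C" "hamming_dist (Gray x) (Gray c) \<le> 1"
      using one_perfect_unique_center[OF perf] by blast
    obtain e where e: "e \<in> z2z4_space a b" "z2z4_add c e = x"
      using z2z4_add_surj c(1) CS x by blast
    have "z2z4_weight e \<le> 1"
      using hamming_dist_Gray_add[of c a b e] c CS e by auto
    then show "x \<in> (\<lambda>(c,e). z2z4_add c e) ` (C \<times> {e \<in> z2z4_space a b. z2z4_weight e \<le> 1})"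
      using c e by (auto intro!: image_eqI[of _ _ "(c,e)"])
  qed
qed

lemma one_perfect_add_bij:
  assumes "C \<subseteq> z2z4_space a b" "z2z4_one_perfect a b C"
  shows "bij_betw (\<lambda>(c,e). z2z4_add c e)
           (C \<times> {e \<in> z2z4_space a b. z2z4_weight e \<le> 1}) (z2z4_space a b)"
  using one_perfect_add_inj_on[OF assms] one_perfect_add_image[OF assms] by (rule bij_betw_imageI)

subsection \<open>Characters\<close>

text \<open>The integer \<open>x\<cdot>v\<close> before reduction modulo 4; the character attached to \<open>v\<close> is
  \<open>x \<mapsto> i^(x\<cdot>v)\<close>, and \<open>re_ipow k\<close> is the real part of \<open>i^k\<close>.\<close>

definition z2z4_pairing :: "z2z4vec \<Rightarrow> z2z4vec \<Rightarrow> nat" where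
  "z2z4_pairing x v = 2 * sum_list (map2 (*) (fst x) (fst v)) + sum_list (map2 (*) (snd x) (snd v))"

definition re_ipow :: "nat \<Rightarrow> int" where
  "re_ipow k = (if k mod 4 = 0 then 1 else if k mod 4 = 2 then -1 else 0)"

lemma z2z4_pairing_Cons_bin [simp]:
  "z2z4_pairing (p#u,u') (q#w,w') = 2*p*q + z2z4_pairing (u,u') (w,w')"
  by (simp add: z2z4_pairing_def)

lemma z2z4_pairing_Cons_quat [simp]:
  "z2z4_pairing (u,p#u') (w,q#w') = p*q + z2z4_pairing (u,u') (w,w')"
  by (simp add: z2z4_pairing_def)

lemma sum_list_map2_times_replicate_0:
  "sum_list (map2 (*) xs (replicate n (0::nat))) = 0"
  "sum_list (map2 (*) (replicate n (0::nat)) xs) = 0"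
  by (auto simp: sum_list_eq_0_iff set_zip)

lemma z2z4_pairing_zero [simp]:
  "z2z4_pairing u (z2z4_zero a b) = 0" "z2z4_pairing (z2z4_zero a b) v = 0"
  by (simp_all add: z2z4_pairing_def z2z4_zero_def sum_list_map2_times_replicate_0)

lemma sum_list_map2_add_mod:
  assumes "length c = length e" "length e = length v"
  shows "sum_list (map2 (*) (map2 (\<lambda>p q. (p + q) mod k) c e) v) mod k
       = (sum_list (map2 (*) c v) + sum_list (map2 (*) e v)) mod (k::nat)"
  using assms
proof (induction c e v rule: list_induct3)
  case (Cons x xs y ys z zs)
  let ?S = "sum_list (map2 (*) (map2 (\<lambda>p q. (p + q) mod k) xs ys) zs)"
  have "((x + y) mod k * z + ?S) mod k = ((x + y) mod k * z mod k + ?S mod k) mod k"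
    by (simp add: mod_add_eq)
  also have "\<dots> = ((x + y) * z mod k + ?S mod k) mod k"
    by (simp add: mod_mult_left_eq)
  also have "\<dots> = (x * z + sum_list (map2 (*) xs zs) + (y * z + sum_list (map2 (*) ys zs))) mod k"
    using Cons.IH by (simp add: mod_add_eq algebra_simps)
  finally show ?case by simp
qed simp

lemma z2z4_pairing_add_mod_4:
  assumes "c \<in> z2z4_space a b" "e \<in> z2z4_space a b" "v \<in> z2z4_space a b"
  shows "z2z4_pairing (z2z4_add c e) v mod 4 = (z2z4_pairing c v + z2z4_pairing e v) mod 4"
proof -
  let ?A = "sum_list (map2 (*) (map2 (\<lambda>p q. (p + q) mod 2) (fst c) (fst e)) (fst v))"
  let ?B = "sum_list (map2 (*) (map2 (\<lambda>p q. (p + q) mod 4) (snd c) (snd e)) (snd v))"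
  let ?A' = "sum_list (map2 (*) (fst c) (fst v)) + sum_list (map2 (*) (fst e) (fst v))"
  have "?A mod 2 = ?A' mod 2"
    using assms by (intro sum_list_map2_add_mod) (auto simp: z2z4_space_iff)
  then have A: "(2 * ?A) mod 4 = (2 * ?A') mod 4"
    using mult_mod_right[of 2 ?A 2] mult_mod_right[of 2 ?A' 2] by simp
  have B: "?B mod 4 = (sum_list (map2 (*) (snd c) (snd v)) + sum_list (map2 (*) (snd e) (snd v))) mod 4"
    using assms by (intro sum_list_map2_add_mod) (auto simp: z2z4_space_iff)
  have "z2z4_pairing (z2z4_add c e) v mod 4 = ((2 * ?A) mod 4 + ?B mod 4) mod 4"
    by (simp add: z2z4_pairing_def z2z4_add_def mod_add_eq)
  also have "\<dots> = (z2z4_pairing c v + z2z4_pairing e v) mod 4"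
    unfolding A B by (simp add: z2z4_pairing_def mod_add_eq algebra_simps)
  finally show ?thesis .
qed

lemma re_ipow_cong: "k mod 4 = l mod 4 \<Longrightarrow> re_ipow k = re_ipow l"
  by (simp add: re_ipow_def)

lemma mod_4_cases:
  fixes t :: nat
  obtains "t mod 4 = 0" | "t mod 4 = 1" | "t mod 4 = 2" | "t mod 4 = 3"
proof -
  have "t mod 4 < 4" by simp
  then show ?thesis using that by linarith
qed

lemma re_ipow_mod [simp]: "re_ipow (t mod 4) = re_ipow t"
  by (simp add: re_ipow_def)

lemma re_ipow_add_mod: "re_ipow (c + t) = re_ipow (c + t mod 4)"
  by (rule re_ipow_cong) (simp add: mod_add_right_eq)

lemma re_ipow_add_2: "re_ipow (2 + t) = - re_ipow t"
proof -
  have "re_ipow (2 + t mod 4) = - re_ipow (t mod 4)"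
    by (cases rule: mod_4_cases[of t]) (simp_all add: re_ipow_def)
  then show ?thesis by (simp only: re_ipow_mod re_ipow_add_mod[of 2 t])
qed

text \<open>The real part of \<open>i^t (1 + i^q + i^(2q) + i^(3q))\<close>, which vanishes unless
  \<open>q \<equiv> 0 (mod 4)\<close>.\<close>
lemma re_ipow_sum_multiples:
  assumes "q \<in> {1,2,3}"
  shows "re_ipow t + re_ipow (q + t) + re_ipow (2*q + t) + re_ipow (3*q + t) = 0"
proof -
  have "re_ipow (t mod 4) + re_ipow (q + t mod 4) + re_ipow (2*q + t mod 4)
      + re_ipow (3*q + t mod 4) = 0"
    using assms by (cases rule: mod_4_cases[of t]; elim insertE emptyE; simp add: re_ipow_def)
  then show ?thesis
    by (simp only: re_ipow_mod re_ipow_add_mod[of q t] re_ipow_add_mod[of "2*q" t]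
          re_ipow_add_mod[of "3*q" t])
qed

text \<open>Orthogonality of characters, generalised over the shift \<open>t\<close> so that the induction goes
  through.\<close>
lemma sum_re_ipow_pairing_eq_0:
  assumes "v \<in> z2z4_space a b" "v \<noteq> z2z4_zero a b"
  shows "(\<Sum>x\<in>z2z4_space a b. re_ipow (z2z4_pairing x v + t)) = 0"
  using assms
proof (induction a b arbitrary: v t rule: z2z4_dims_induct)
  case 0
  then show ?case by (auto simp: z2z4_space_0_0 z2z4_zero_def)
next
  case (Suc_bin a b)
  then obtain q w w' where v: "v = (q#w, w')" and q: "q \<in> {0,1}" and w: "(w,w') \<in> z2z4_space a b"
    unfolding z2z4_space_Suc_bin by auto
  let ?S = "\<lambda>s. \<Sum>u\<in>z2z4_space a b. re_ipow (z2z4_pairing u (w,w') + s)"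
  have "(\<Sum>x\<in>z2z4_space (Suc a) b. re_ipow (z2z4_pairing x v + t)) = ?S t + ?S (2*q + t)"
    by (simp add: sum_z2z4_space_Suc_bin v add.assoc add.left_commute)
  moreover have "?S t + ?S (2*q + t) = 0"
  proof (cases "(w,w') = z2z4_zero a b")
    case True
    then have "q = 1" using Suc_bin.prems q by (auto simp: v z2z4_zero_def)
    then show ?thesis using True re_ipow_add_2[of t] by simp
  qed (use Suc_bin.IH w in simp)
  ultimately show ?case by simp
next
  case (Suc_quat a b)
  then obtain q w w' where v: "v = (w, q#w')" and q: "q \<in> {0,1,2,3}" and w: "(w,w') \<in> z2z4_space a b"
    unfolding z2z4_space_Suc_quat by auto
  let ?S = "\<lambda>s. \<Sum>u\<in>z2z4_space a b. re_ipow (z2z4_pairing u (w,w') + s)"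
  have "(\<Sum>x\<in>z2z4_space a (Suc b). re_ipow (z2z4_pairing x v + t))
      = ?S t + ?S (q + t) + ?S (2*q + t) + ?S (3*q + t)"
    by (simp add: sum_z2z4_space_Suc_quat v add.assoc add.left_commute)
  moreover have "?S t + ?S (q + t) + ?S (2*q + t) + ?S (3*q + t) = 0"
  proof (cases "(w,w') = z2z4_zero a b")
    case True
    then have "q \<in> {1,2,3}" using Suc_quat.prems q by (auto simp: v z2z4_zero_def)
    then show ?thesis
      using True re_ipow_sum_multiples by (simp add: sum_distrib_left[symmetric] flip: distrib_left)
  qed (use Suc_quat.IH w in simp)
  ultimately show ?case by simp
qed

text \<open>Each binary unit vector contributes \<open>i^(2v\<^sub>j) = 1 - 2 w(v\<^sub>j)\<close>, and the two quaternary
  unit vectors \<open>\<pm>1\<close> in position \<open>j\<close> contribute \<open>Re(i^(v\<^sub>j) + i^(3v\<^sub>j)) = 2 - 2 w\<^sub>L(v\<^sub>j)\<close>.\<close>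
lemma sum_weight_le_1_re_ipow_pairing:
  assumes "v \<in> z2z4_space a b"
  shows "(\<Sum>e\<in>z2z4_space a b. if z2z4_weight e \<le> 1 then re_ipow (z2z4_pairing e v) else 0)
       = 1 + int a + 2 * int b - 2 * int (z2z4_weight v)"
  using assms
proof (induction a b arbitrary: v rule: z2z4_dims_induct)
  case 0
  then show ?case by (auto simp: z2z4_space_0_0 z2z4_weight_def z2z4_pairing_def re_ipow_def)
next
  case (Suc_bin a b)
  then obtain q w w' where v: "v = (q#w, w')" and q: "q \<in> {0,1}" and w: "(w,w') \<in> z2z4_space a b"
    unfolding z2z4_space_Suc_bin by auto
  have "(\<Sum>e\<in>z2z4_space (Suc a) b. if z2z4_weight e \<le> 1 then re_ipow (z2z4_pairing e v) else 0)
      = (\<Sum>u\<in>z2z4_space a b. if z2z4_weight u \<le> 1 then re_ipow (z2z4_pairing u (w,w')) else 0)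
      + (\<Sum>u\<in>z2z4_space a b. if z2z4_weight u = 0 then re_ipow (2*q + z2z4_pairing u (w,w')) else 0)"
    unfolding v by (simp add: sum_z2z4_space_Suc_bin add.assoc cong: if_cong)
  also have "\<dots> = 1 + int (Suc a) + 2 * int b - 2 * int (z2z4_weight v)"
    using Suc_bin.IH[OF w] q by (auto simp: sum_z2z4_space_if_weight_eq_0 v re_ipow_def)
  finally show ?case .
next
  case (Suc_quat a b)
  then obtain q w w' where v: "v = (w, q#w')" and q: "q \<in> {0,1,2,3}" and w: "(w,w') \<in> z2z4_space a b"
    unfolding z2z4_space_Suc_quat by auto
  have "(\<Sum>e\<in>z2z4_space a (Suc b). if z2z4_weight e \<le> 1 then re_ipow (z2z4_pairing e v) else 0)
      = (\<Sum>u\<in>z2z4_space a b. if z2z4_weight u \<le> 1 then re_ipow (z2z4_pairing u (w,w')) else 0)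
      + (\<Sum>u\<in>z2z4_space a b. if z2z4_weight u = 0 then re_ipow (q + z2z4_pairing u (w,w')) else 0)
      + (\<Sum>u\<in>z2z4_space a b. if z2z4_weight u = 0 then re_ipow (3*q + z2z4_pairing u (w,w')) else 0)"
    unfolding v by (simp add: sum_z2z4_space_Suc_quat lee_weight_def add.assoc cong: if_cong)
  also have "\<dots> = 1 + int a + 2 * int (Suc b) - 2 * int (z2z4_weight v)"
    using Suc_quat.IH[OF w] q by (auto simp: sum_z2z4_space_if_weight_eq_0 v re_ipow_def lee_weight_def)
  finally show ?case .
qed

lemma sum_re_ipow_pairing_one_perfect:
  assumes CS: "C \<subseteq> z2z4_space a b" and perf: "z2z4_one_perfect a b C"
    and v: "v \<in> z2z4_dual a b C"
  shows "(\<Sum>x\<in>z2z4_space a b. re_ipow (z2z4_pairing x v))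
       = int (card C) * (\<Sum>e\<in>z2z4_space a b. if z2z4_weight e \<le> 1 then re_ipow (z2z4_pairing e v) else 0)"
proof -
  let ?S = "z2z4_space a b"
  let ?B = "{e \<in> ?S. z2z4_weight e \<le> 1}"
  have vS: "v \<in> ?S" using v by (simp add: z2z4_dual_def)
  have translate: "re_ipow (z2z4_pairing (z2z4_add c e) v) = re_ipow (z2z4_pairing e v)"
    if "c \<in> C" "e \<in> ?S" for c e
  proof (rule re_ipow_cong)
    have "z2z4_pairing c v mod 4 = 0"
      using v that(1) by (simp add: z2z4_dual_def z2z4_inner_def z2z4_pairing_def)
    then show "z2z4_pairing (z2z4_add c e) v mod 4 = z2z4_pairing e v mod 4"
      using z2z4_pairing_add_mod_4[OF _ that(2) vS, of c] that(1) CS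
      by (auto simp flip: mod_add_left_eq)
  qed
  have "(\<Sum>x\<in>?S. re_ipow (z2z4_pairing x v))
      = (\<Sum>(c,e)\<in>C \<times> ?B. re_ipow (z2z4_pairing (z2z4_add c e) v))"
    using sum.reindex_bij_betw[OF one_perfect_add_bij[OF CS perf], of "\<lambda>x. re_ipow (z2z4_pairing x v)"]
    by (simp add: case_prod_unfold)
  also have "\<dots> = (\<Sum>c\<in>C. \<Sum>e\<in>?B. re_ipow (z2z4_pairing e v))"
    unfolding sum.cartesian_product[symmetric] by (intro sum.cong refl) (simp add: translate)
  also have "\<dots> = int (card C) * (\<Sum>e\<in>?S. if z2z4_weight e \<le> 1 then re_ipow (z2z4_pairing e v) else 0)"
    using finite_z2z4_space by (simp add: sum.inter_filter)
  finally show ?thesis .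
qed

lemma Suc_perfect_code_length:
  assumes "r \<ge> 1"
  shows "Suc ((2^r - 1) + 2 * (2^(r-1) * (2^r - 1))) = (2^(2*r) :: nat)"
proof -
  obtain k where r: "r = Suc k" using assms by (cases r) auto
  obtain m where m: "(2::nat)^k = Suc m" using not0_implies_Suc[of "2^k"] by auto
  show ?thesis by (simp add: r m power_mult power2_eq_square algebra_simps)
qed

theorem lemma3p3:
  fixes r :: nat and C :: "z2z4vec set"
  assumes "r \<ge> 2"
    and "z2z4_additive (2^r - 1) (2^(r-1) * (2^r - 1)) C"
    and "z2z4_one_perfect (2^r - 1) (2^(r-1) * (2^r - 1)) C"
  shows "\<forall>v \<in> z2z4_dual (2^r - 1) (2^(r-1) * (2^r - 1)) C.
           v \<noteq> z2z4_zero (2^r - 1) (2^(r-1) * (2^r - 1)) \<longrightarrow> z2z4_weight v = 2^(2*r - 1)"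
proof (intro ballI impI)
  let ?a = "2^r - 1" and ?b = "2^(r-1) * (2^r - 1)"
  fix v assume v: "v \<in> z2z4_dual ?a ?b C" and nonzero: "v \<noteq> z2z4_zero ?a ?b"
  have vS: "v \<in> z2z4_space ?a ?b" using v by (simp add: z2z4_dual_def)
  have CS: "C \<subseteq> z2z4_space ?a ?b" and "z2z4_zero ?a ?b \<in> C"
    using assms(2) by (simp_all add: z2z4_additive_def)
  then have "card C \<noteq> 0" using finite_subset[OF CS finite_z2z4_space] by auto
  moreover have "int (card C) * (\<Sum>e\<in>z2z4_space ?a ?b.
      if z2z4_weight e \<le> 1 then re_ipow (z2z4_pairing e v) else 0) = 0"
    using sum_re_ipow_pairing_one_perfect[OF CS assms(3) v] sum_re_ipow_pairing_eq_0[OF vS nonzero, of 0]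
    by simp
  ultimately have "(\<Sum>e\<in>z2z4_space ?a ?b.
      if z2z4_weight e \<le> 1 then re_ipow (z2z4_pairing e v) else 0) = 0"
    by simp
  then have "2 * z2z4_weight v = Suc (?a + 2 * ?b)"
    using sum_weight_le_1_re_ipow_pairing[OF vS] by linarith
  also have "\<dots> = 2^(2*r)"
    by (rule Suc_perfect_code_length) (use assms(1) in simp)
  also have "\<dots> = 2 * 2^(2*r - 1)"
    using assms(1) by (cases r) simp_all
  finally show "z2z4_weight v = 2^(2*r - 1)" by simp
qed

end
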